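(* Let $G$ be a finite group with identity $e$ and let $H$ be a normal subgroup of $G$. Then the subgroup sum graph $\Gamma_{G,H}$ admits a perfect code if and only if at least one of the following holds: (i) $H=\{e\}$; (ii) $|H|=2$; (iii) for every $x\in G\setminus H$ with $x^2\in H$, the coset $Hx$ contains an involution.
   Context: For a normal subgroup $H$ of a finite group $G$ with identity $e$, the subgroup sum graph $\Gamma_{G,H}$ is the simple undirected graph with vertex set $G$ in which distinct vertices $x,y$ are adjacent if and only if $xy\in H\setminus\{e\}$ (this is symmetric because $H$ is normal). A perfect code in a graph is a set $C$ of vertices that is independent and such that every vertex not in $C$ is adjacent to exactly one vertex of $C$. An involution is an element of order exactly $2$. *)

theory Defs
  imports "HOL-Algebra.Algebra"
begin

definition sum_adj :: "('a, 'b) monoid_scheme \<Rightarrow> 'a set \<Rightarrow> 'a \<Rightarrow> 'a \<Rightarrow> bool" where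
  "sum_adj G H x y \<longleftrightarrow> x \<in> carrier G \<and> y \<in> carrier G \<and> x \<noteq> y \<and>
      x \<otimes>\<^bsub>G\<^esub> y \<in> H - {\<one>\<^bsub>G\<^esub>}"

definition is_perfect_code :: "('a, 'b) monoid_scheme \<Rightarrow> 'a set \<Rightarrow> 'a set \<Rightarrow> bool" where
  "is_perfect_code G H C \<longleftrightarrow> C \<subseteq> carrier G \<and>
      (\<forall>x\<in>C. \<forall>y\<in>C. \<not> sum_adj G H x y) \<and>
      (\<forall>v\<in>carrier G - C. \<exists>!c. c \<in> C \<and> sum_adj G H v c)"

end

theory Submission
  imports Defs
begin

text \<open>
  For normal \<open>H\<close>, the vertex \<open>v\<close> is adjacent exactly to the elements of the coset \<open>Hv\<^sup>-\<^sup>1\<close>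
  other than \<open>v\<close> and \<open>v\<^sup>-\<^sup>1\<close>, so every edge stays inside a block \<open>Hv \<union> Hv\<^sup>-\<^sup>1\<close>.
  If \<open>Hv \<noteq> Hv\<^sup>-\<^sup>1\<close>, any pair \<open>{a, a\<^sup>-\<^sup>1}\<close> with \<open>a\<close> in the block is a perfect code of the block.
  If \<open>Hv = Hv\<^sup>-\<^sup>1\<close>, an element \<open>u\<close> of the coset with \<open>u\<^sup>2 = e\<close> gives the perfect code \<open>{u}\<close>;
  without such an element a code containing \<open>c\<close> must also contain \<open>c\<^sup>-\<^sup>1 \<noteq> c\<close>, and then any
  third element of the coset would be dominated twice, so \<open>|H| = 2\<close>.
\<close>

lemma (in group) ord_eq_2_iff:
  assumes "x \<in> carrier G"
  shows "ord x = 2 \<longleftrightarrow> x \<noteq> \<one> \<and> x \<otimes> x = \<one>"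
proof -
  have "x \<otimes> x = \<one> \<longleftrightarrow> ord x dvd 2"
    using pow_eq_id[OF assms, of 2] assms by (simp add: numeral_2_eq_2)
  moreover have "x = \<one> \<longleftrightarrow> ord x = 1" using ord_eq_1[OF assms] by simp
  moreover have "ord x dvd 2 \<longleftrightarrow> ord x = 1 \<or> ord x = 2"
    using dvd_imp_le[of "ord x" 2] by (cases "ord x = 0") (auto simp: le_Suc_eq numeral_2_eq_2)
  ultimately show ?thesis by auto
qed

lemma (in subgroup) card_le_2_iff:
  assumes "finite H"
  shows "card H \<le> 2 \<longleftrightarrow> H = {\<one>\<^bsub>G\<^esub>} \<or> card H = 2"
proof -
  have "card H \<noteq> 0" using assms one_closed card_0_eq by blast
  moreover have "card H = 1 \<longleftrightarrow> H = {\<one>\<^bsub>G\<^esub>}"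
    using one_closed card_1_singleton_iff[of H] by (metis One_nat_def singletonD)
  ultimately show ?thesis by auto
qed

context normal
begin

lemma inv_mem_rcos_inv:
  assumes "x \<in> carrier G" "w \<in> H #> x"
  shows "inv w \<in> H #> inv x"
  using assms rcos_inv[OF assms(1)] unfolding SET_INV_def by blast

lemma rcos_inv_eq_iff:
  assumes x: "x \<in> carrier G"
  shows "H #> inv x = H #> x \<longleftrightarrow> x \<otimes> x \<in> H"
proof -
  have "H #> inv x = H #> x \<longleftrightarrow> inv x \<in> H #> x"
    using x repr_independence[OF _ x subgroup_axioms] repr_independenceD[OF subgroup_axioms]
    by (metis inv_closed)
  also have "\<dots> \<longleftrightarrow> inv (x \<otimes> x) \<in> H"
    using x rcos_module[OF is_group x] by (simp add: inv_mult_group)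
  also have "\<dots> \<longleftrightarrow> x \<otimes> x \<in> H"
    using x by (metis inv_inv m_closed m_inv_closed)
  finally show ?thesis .
qed

lemma square_mem_if_rcos_meets_rcos_inv:
  assumes x: "x \<in> carrier G" and "w \<in> H #> x" "w \<in> H #> inv x"
  shows "x \<otimes> x \<in> H"
proof -
  have "H #> x = H #> w"
    by (rule repr_independence[OF assms(2) x subgroup_axioms])
  moreover have "H #> inv x = H #> w"
    by (rule repr_independence[OF assms(3) _ subgroup_axioms]) (use x in simp)
  ultimately show ?thesis using rcos_inv_eq_iff[OF x] by simp
qed

lemma sum_adj_iff:
  "sum_adj G H v c \<longleftrightarrow> v \<in> carrier G \<and> c \<in> H #> inv v \<and> c \<noteq> v \<and> c \<noteq> inv v"
proof (cases "v \<in> carrier G \<and> c \<in> carrier G")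
  case True
  then have "v \<otimes> c \<in> H \<longleftrightarrow> c \<otimes> v \<in> H"
    by (metis inv_op_closed1 inv_solve_left m_closed)
  also have "\<dots> \<longleftrightarrow> c \<in> H #> inv v"
    using True rcos_module[OF is_group, of "inv v" c] by simp
  finally show ?thesis
    unfolding sum_adj_def using True inv_equality[of v c] by (auto simp: r_inv)
next
  case False
  then show ?thesis
    unfolding sum_adj_def using elemrcos_carrier[OF is_group] by blast
qed

lemma sum_adj_within_self_inverse_rcos:
  assumes x: "x \<in> carrier G" and xx: "x \<otimes> x \<in> H" and w: "w \<in> H #> x"
  shows "sum_adj G H w c \<longleftrightarrow> c \<in> H #> x \<and> c \<noteq> w \<and> c \<noteq> inv w"
proof -
  have "H #> inv w = H #> inv x"
    using inv_mem_rcos_inv[OF x w] repr_independence[OF _ _ subgroup_axioms] x by auto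
  then have "H #> inv w = H #> x" using rcos_inv_eq_iff[OF x] xx by simp
  then show ?thesis
    using sum_adj_iff elemrcos_carrier[OF is_group x w] by simp
qed

lemma card_rcos:
  assumes "x \<in> carrier G"
  shows "card (H #> x) = card H"
  using card_rcosets_equal[OF rcosetsI[OF subset assms] subset] by simp

lemma perfect_code_of_block_selector:
  assumes sel: "\<And>v. v \<in> carrier G \<Longrightarrow> \<rho> v \<in> (H #> v) \<union> (H #> inv v)"
    and const: "\<And>v w. v \<in> carrier G \<Longrightarrow> w \<in> (H #> v) \<union> (H #> inv v) \<Longrightarrow> \<rho> w = \<rho> v"
    and root: "\<And>v u. v \<in> carrier G \<Longrightarrow> u \<in> (H #> v) \<union> (H #> inv v) \<Longrightarrow> u \<otimes> u = \<one>
                  \<Longrightarrow> \<rho> v \<otimes> \<rho> v = \<one>"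
    and small: "finite H \<and> card H \<le> 2 \<or> (\<forall>x\<in>carrier G. x \<otimes> x \<in> H \<longrightarrow> (\<exists>u\<in>H #> x. u \<otimes> u = \<one>))"
  shows "is_perfect_code G H {c \<in> carrier G. c = \<rho> c \<or> inv c = \<rho> c}"
    (is "is_perfect_code G H ?C")
proof -
  have \<rho>_carrier: "\<rho> v \<in> carrier G" if "v \<in> carrier G" for v
    using sel[OF that] elemrcos_carrier[OF is_group] that by blast
  have code_in_block: "c \<in> ?C \<longleftrightarrow> c = \<rho> v \<or> c = inv (\<rho> v)"
    if "v \<in> carrier G" "c \<in> (H #> v) \<union> (H #> inv v)" for v c
  proof -
    have "c \<in> carrier G" "\<rho> c = \<rho> v"
      using that const elemrcos_carrier[OF is_group] by blast+
    moreover have "inv c = \<rho> v \<longleftrightarrow> c = inv (\<rho> v)"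
      using \<open>c \<in> carrier G\<close> \<rho>_carrier[OF \<open>v \<in> carrier G\<close>] by (metis inv_inv)
    ultimately show ?thesis by auto
  qed
  have single_code_neighbour: "\<rho> v = inv (\<rho> v)"
    if v: "v \<in> carrier G" and "v \<noteq> \<rho> v" "v \<noteq> inv (\<rho> v)"
      and \<rho>_in: "\<rho> v \<in> H #> inv v" and inv_\<rho>_in: "inv (\<rho> v) \<in> H #> inv v" for v
  proof (rule ccontr)
    assume distinct: "\<rho> v \<noteq> inv (\<rho> v)"
    have "\<rho> v \<in> H #> v"
      using inv_mem_rcos_inv[OF _ inv_\<rho>_in] v \<rho>_carrier by simp
    then have vv: "v \<otimes> v \<in> H"
      using square_mem_if_rcos_meets_rcos_inv[OF v _ \<rho>_in] by blast
    then have same: "H #> inv v = H #> v" using rcos_inv_eq_iff[OF v] by blast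
    show False
    proof (cases "\<exists>u\<in>H #> v. u \<otimes> u = \<one>")
      case True
      then have "\<rho> v \<otimes> \<rho> v = \<one>" using root[OF v] by blast
      then show False using distinct inv_equality \<rho>_carrier[OF v] by metis
    next
      case False
      then have fin: "finite H" and two: "card H \<le> 2" using small vv v by blast+
      have "finite (H #> v)" using fin unfolding r_coset_def by blast
      moreover have "{v, \<rho> v, inv (\<rho> v)} \<subseteq> H #> v"
        using \<rho>_in inv_\<rho>_in same rcos_self[OF v subgroup_axioms] by auto
      ultimately have "card {v, \<rho> v, inv (\<rho> v)} \<le> card H"
        using card_mono card_rcos[OF v] by metis
      then show False using two distinct that(2,3) by simp
    qed
  qed
  show ?thesis
    unfolding is_perfect_code_def
  proof (intro conjI ballI)
    show "?C \<subseteq> carrier G" by blast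
  next
    fix v c assume "v \<in> ?C" "c \<in> ?C"
    then show "\<not> sum_adj G H v c"
      using code_in_block[of v c] code_in_block[of v v] rcos_self[OF _ subgroup_axioms]
      by (auto simp: sum_adj_iff)
  next
    fix v assume "v \<in> carrier G - ?C"
    then have v: "v \<in> carrier G" and "v \<notin> ?C" by auto
    then have "v \<noteq> \<rho> v" "v \<noteq> inv (\<rho> v)"
      using code_in_block[of v v] rcos_self[OF v subgroup_axioms] by auto
    then have neighbours: "c \<in> ?C \<and> sum_adj G H v c \<longleftrightarrow> c \<in> H #> inv v \<and> (c = \<rho> v \<or> c = inv (\<rho> v))"
      for c using code_in_block[OF v, of c] v \<rho>_carrier[OF v] by (auto simp: sum_adj_iff)
    have "\<rho> v \<in> H #> inv v \<or> inv (\<rho> v) \<in> H #> inv v"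
      using sel[OF v] inv_mem_rcos_inv[OF v] by blast
    then show "\<exists>!c. c \<in> ?C \<and> sum_adj G H v c"
      unfolding neighbours using single_code_neighbour[OF v] \<open>v \<noteq> \<rho> v\<close> \<open>v \<noteq> inv (\<rho> v)\<close>
      by metis
  qed
qed

lemma rcos_pair_eq:
  assumes v: "v \<in> carrier G" and w: "w \<in> (H #> v) \<union> (H #> inv v)"
  shows "(H #> w) \<union> (H #> inv w) = (H #> v) \<union> (H #> inv v)"
  using w
proof
  assume w: "w \<in> H #> v"
  have "H #> w = H #> v"
    using repr_independence[OF w v subgroup_axioms] by simp
  moreover have "H #> inv w = H #> inv v"
    using repr_independence[OF inv_mem_rcos_inv[OF v w] _ subgroup_axioms] v by simp
  ultimately show ?thesis by simp
next
  assume w: "w \<in> H #> inv v"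
  have "H #> w = H #> inv v"
    using repr_independence[OF w _ subgroup_axioms] v by simp
  moreover have "H #> inv w = H #> v"
    using repr_independence[OF inv_mem_rcos_inv[OF _ w] _ subgroup_axioms] v by simp
  ultimately show ?thesis by blast
qed

lemma perfect_code_existsI:
  assumes "finite H \<and> card H \<le> 2 \<or> (\<forall>x\<in>carrier G. x \<otimes> x \<in> H \<longrightarrow> (\<exists>u\<in>H #> x. u \<otimes> u = \<one>))"
  shows "\<exists>C. is_perfect_code G H C"
proof -
  define pick where
    "pick S = (if \<exists>u\<in>S. u \<otimes> u = \<one> then SOME u. u \<in> S \<and> u \<otimes> u = \<one> else SOME u. u \<in> S)"
    for S
  have pick_mem: "pick S \<in> S" if "u \<in> S" for S u
    unfolding pick_def
    using that someI_ex[of "\<lambda>u. u \<in> S \<and> u \<otimes> u = \<one>"] someI[of "\<lambda>u. u \<in> S"] by auto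
  have pick_root: "pick S \<otimes> pick S = \<one>" if "u \<in> S" "u \<otimes> u = \<one>" for S u
    unfolding pick_def using that someI_ex[of "\<lambda>u. u \<in> S \<and> u \<otimes> u = \<one>"] by auto
  define \<rho> where "\<rho> v = pick ((H #> v) \<union> (H #> inv v))" for v
  have "is_perfect_code G H {c \<in> carrier G. c = \<rho> c \<or> inv c = \<rho> c}"
  proof (rule perfect_code_of_block_selector[OF _ _ _ assms])
    show "\<rho> v \<in> (H #> v) \<union> (H #> inv v)" if "v \<in> carrier G" for v
      unfolding \<rho>_def using pick_mem rcos_self[OF that subgroup_axioms] by blast
    show "\<rho> w = \<rho> v" if "v \<in> carrier G" "w \<in> (H #> v) \<union> (H #> inv v)" for v w
      unfolding \<rho>_def using rcos_pair_eq[OF that] by simp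
    show "\<rho> v \<otimes> \<rho> v = \<one>"
      if "u \<in> (H #> v) \<union> (H #> inv v)" "u \<otimes> u = \<one>" for v u
      unfolding \<rho>_def using pick_root[OF that] .
  qed
  then show ?thesis by blast
qed

lemma card_le_2_if_perfect_code_rootless_rcos:
  assumes code: "is_perfect_code G H C"
    and x: "x \<in> carrier G" and xx: "x \<otimes> x \<in> H" and no_root: "\<not> (\<exists>u\<in>H #> x. u \<otimes> u = \<one>)"
  shows "finite H \<and> card H \<le> 2"
proof -
  let ?K = "H #> x"
  have indep: "\<And>a b. a \<in> C \<Longrightarrow> b \<in> C \<Longrightarrow> \<not> sum_adj G H a b"
    and dom: "\<And>v. v \<in> carrier G - C \<Longrightarrow> \<exists>!c. c \<in> C \<and> sum_adj G H v c"
    using code unfolding is_perfect_code_def by auto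
  have adj: "sum_adj G H w c \<longleftrightarrow> c \<in> ?K \<and> c \<noteq> w \<and> c \<noteq> inv w" if "w \<in> ?K" for w c
    using sum_adj_within_self_inverse_rcos[OF x xx that] .
  have K_carrier: "w \<in> carrier G" if "w \<in> ?K" for w
    using elemrcos_carrier[OF is_group x that] .
  have inv_in_K: "inv w \<in> ?K" if "w \<in> ?K" for w
    using inv_mem_rcos_inv[OF x that] rcos_inv_eq_iff[OF x] xx by simp
  have not_self_inverse: "w \<noteq> inv w" if "w \<in> ?K" for w
    using no_root that K_carrier[OF that] by (metis r_inv)
  obtain c where cC: "c \<in> C" and cK: "c \<in> ?K"
  proof (cases "x \<in> C")
    case True
    then show ?thesis using that rcos_self[OF x subgroup_axioms] by blast
  next
    case False
    then obtain c where "c \<in> C" "sum_adj G H x c" using dom x by blast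
    then show ?thesis using that adj rcos_self[OF x subgroup_axioms] by blast
  qed
  have cG: "c \<in> carrier G" using K_carrier[OF cK] .
  have inv_cC: "inv c \<in> C"
  proof (rule ccontr)
    assume "inv c \<notin> C"
    then obtain c' where "c' \<in> C" "sum_adj G H (inv c) c'" using dom cG by blast
    then have "sum_adj G H c c'" using adj inv_in_K[OF cK] cK cG by auto
    then show False using indep cC \<open>c' \<in> C\<close> by blast
  qed
  have "?K \<subseteq> {c, inv c}"
  proof
    fix w assume wK: "w \<in> ?K"
    show "w \<in> {c, inv c}"
    proof (rule ccontr)
      assume "w \<notin> {c, inv c}"
      then have "w \<noteq> c" "w \<noteq> inv c" "c \<noteq> inv w" "inv c \<noteq> inv w"
        using cG K_carrier[OF wK] by auto
      then have "sum_adj G H w c" "sum_adj G H w (inv c)" "sum_adj G H c w"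
        using adj wK cK inv_in_K by auto
      then show False
        using dom[of w] indep[OF cC] cC inv_cC K_carrier[OF wK] not_self_inverse[OF cK] by blast
    qed
  qed
  then have "finite ?K" and "card ?K \<le> card {c, inv c}"
    by (auto intro: finite_subset card_mono)
  moreover have "card {c, inv c} \<le> 2" by (simp add: card_insert_if)
  moreover have "card ?K > 0" using cK \<open>finite ?K\<close> card_gt_0_iff by blast
  ultimately show ?thesis using card_rcos[OF x] card_ge_0_finite by auto
qed

lemma perfect_code_exists_iff:
  "(\<exists>C. is_perfect_code G H C) \<longleftrightarrow>
     finite H \<and> card H \<le> 2 \<or> (\<forall>x\<in>carrier G. x \<otimes> x \<in> H \<longrightarrow> (\<exists>u\<in>H #> x. u \<otimes> u = \<one>))"
  using perfect_code_existsI card_le_2_if_perfect_code_rootless_rcos by blast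

lemma rcos_square_root_one_iff:
  assumes x: "x \<in> carrier G"
  shows "(\<exists>u\<in>H #> x. u \<otimes> u = \<one>) \<longleftrightarrow> x \<in> H \<or> (\<exists>g\<in>H #> x. ord g = 2)"
proof -
  have "\<one> \<in> H #> x \<longleftrightarrow> x \<in> H"
    using rcos_module[OF is_group x] x by (metis inv_inv l_one one_closed m_inv_closed inv_closed)
  then show ?thesis
    using ord_eq_2_iff elemrcos_carrier[OF is_group x] by (metis l_one one_closed)
qed

end

theorem theorem3p1:
  fixes G (structure) and H :: "'a set"
  assumes "group G" and "finite (carrier G)" and "H \<lhd> G"
  shows "(\<exists>C. is_perfect_code G H C) \<longleftrightarrow>
           (H = {\<one>} \<or> card H = 2 \<or>
            (\<forall>x \<in> carrier G - H. x \<otimes> x \<in> H \<longrightarrow>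
               (\<exists>g \<in> H #> x. group.ord G g = 2)))"
proof -
  interpret normal H G by (rule assms(3))
  have "finite H" using assms(2) subset finite_subset by blast
  then show ?thesis
    unfolding perfect_code_exists_iff card_le_2_iff[OF \<open>finite H\<close>]
    using rcos_square_root_one_iff by blast
qed

end
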